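(* Let $0<p<1$ and let $P_1,\ldots,P_n,Q\in\mathbb{R}^n$ with $P_1,\ldots,P_n$ linearly independent. If $M\in p\text{-conv}\{P_1,\ldots,P_n,Q,0\}$, then there exist $P_{i_1},\ldots,P_{i_n}\in\{P_1,\ldots,P_n,Q\}$ such that $M\in p\text{-conv}\{P_{i_1},\ldots,P_{i_n},0\}$.
   Context: Let $0<p<1$. A set $B\subseteq \mathbb{R}^n$ is called $p$-convex if $\lambda x+\mu y\in B$ whenever $x,y\in B$ and $\lambda,\mu\ge 0$ with $\lambda^p+\mu^p=1$. For $A\subseteq \mathbb{R}^n$, the $p$-convex hull $p\text{-conv}(A)$ is the intersection of all $p$-convex subsets of $\mathbb{R}^n$ containing $A$. *)

theory Defs
  imports "HOL-Analysis.Analysis"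
begin

definition p_convex :: "real \<Rightarrow> ('a::real_vector) set \<Rightarrow> bool" where
  "p_convex p B \<longleftrightarrow>
     (\<forall>x\<in>B. \<forall>y\<in>B. \<forall>a b. a \<ge> 0 \<and> b \<ge> 0 \<and> a powr p + b powr p = 1
        \<longrightarrow> a *\<^sub>R x + b *\<^sub>R y \<in> B)"

definition p_conv :: "real \<Rightarrow> ('a::real_vector) set \<Rightarrow> 'a set" where
  "p_conv p A = \<Inter>{B. p_convex p B \<and> A \<subseteq> B}"

end

theory Submission
  imports Defs
begin

(* Every point of p-conv {0, R_1, ..., R_m} is a combination sum c_i R_i with c_i >= 0 and
   sum c_i^p <= 1: such combinations form a p-convex set because t -> t^p is subadditive, and
   any p-convex set containing 0 and the R_i contains them. The n + 1 vectors P_1, ..., P_n, Q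
   satisfy a nontrivial linear relation sum q_i R_i = 0, so M = sum (c_i - t q_i) R_i for every
   real t. On the interval of those t for which all coefficients stay nonnegative the function
   t -> sum (c_i - t q_i)^p is concave, hence at one endpoint of the interval it is at most its
   value at t = 0; there some coefficient vanishes and its generator can be dropped. *)

lemma powr_mult_powr_le:
  fixes x y p :: real
  assumes "0 \<le> x" "0 \<le> y" "0 \<le> p" "p \<le> 1"
  shows "x powr p * y powr (1 - p) \<le> p * x + (1 - p) * y"
proof (cases "x = 0 \<or> y = 0")
  case True
  then show ?thesis using assms by auto
next
  case False
  then show ?thesis using assms by (intro Youngs_inequality_0) auto
qed

lemma concave_on_powr:
  fixes p :: real
  assumes "0 < p" "p \<le> 1"
  shows "concave_on {0..} (\<lambda>x. x powr p)"
  unfolding concave_on_iff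
proof (intro conjI convex_real_interval ballI allI impI)
  fix x y u v :: real
  assume x: "x \<in> {0..}" and y: "y \<in> {0..}" and u: "0 \<le> u" and v: "0 \<le> v" and uv: "u + v = 1"
  define m where "m = u * x + v * y"
  show "u * x powr p + v * y powr p \<le> (u *\<^sub>R x + v *\<^sub>R y) powr p"
  proof (cases "m = 0")
    case True
    then have "u * x = 0" "v * y = 0"
      using u v x y unfolding m_def by (simp_all add: add_nonneg_eq_0_iff)
    then show ?thesis by auto
  next
    case False
    moreover have "0 \<le> m" using u v x y unfolding m_def by simp
    ultimately have m: "0 < m" by simp
    have "(u * x powr p + v * y powr p) * m powr (1 - p)
        = u * (x powr p * m powr (1 - p)) + v * (y powr p * m powr (1 - p))"
      by (simp add: algebra_simps)
    also have "\<dots> \<le> u * (p * x + (1 - p) * m) + v * (p * y + (1 - p) * m)"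
      using assms u v x y m
      by (intro add_mono mult_left_mono powr_mult_powr_le) auto
    also have "\<dots> = p * m + (1 - p) * (u + v) * m"
      by (simp add: m_def algebra_simps)
    also have "\<dots> = m powr p * m powr (1 - p)"
      using m uv by (simp add: algebra_simps flip: powr_add)
    finally show ?thesis
      using m by (simp add: m_def)
  qed
qed

lemma powr_add_le:
  fixes a b p :: real
  assumes "0 \<le> a" "0 \<le> b" "0 < p" "p \<le> 1"
  shows "(a + b) powr p \<le> a powr p + b powr p"
proof (cases "a + b = 0")
  case True
  then show ?thesis using assms by simp
next
  case False
  define m where "m = a + b"
  have m: "0 < m" using False assms unfolding m_def by simp
  have "t * m powr p \<le> (t * m) powr p" if "0 \<le> t" "t \<le> 1" for t
    using concave_onD[OF concave_on_powr[OF assms(3,4)], of t 0 m] that m assms(3) by simp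
  from this[of "a / m"] this[of "b / m"]
  have "a / m * m powr p + b / m * m powr p \<le> a powr p + b powr p"
    using assms m by (simp add: m_def)
  also have "a / m * m powr p + b / m * m powr p = (a + b) / m * m powr p"
    by (simp add: add_divide_distrib algebra_simps)
  also have "\<dots> = m powr p"
    using m by (simp add: m_def)
  finally show ?thesis by (simp add: m_def)
qed

lemma powr_sum_concave:
  fixes x y :: "'i::finite \<Rightarrow> real"
  assumes "0 < p" "p \<le> 1" "\<forall>i. 0 \<le> x i" "\<forall>i. 0 \<le> y i" "0 \<le> \<theta>" "\<theta> \<le> 1"
  shows "(1 - \<theta>) * (\<Sum>i\<in>UNIV. x i powr p) + \<theta> * (\<Sum>i\<in>UNIV. y i powr p)
    \<le> (\<Sum>i\<in>UNIV. ((1 - \<theta>) * x i + \<theta> * y i) powr p)"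
  unfolding sum_distrib_left sum.distrib[symmetric]
  using assms concave_onD[OF concave_on_powr[of p]] by (intro sum_mono) simp

lemma min_ratio_test:
  fixes c q :: "'i::finite \<Rightarrow> real"
  assumes c: "\<forall>i. 0 \<le> c i" and "0 < q j"
  shows "\<exists>t\<ge>0. (\<forall>i. 0 \<le> c i - t * q i) \<and> (\<exists>k. c k - t * q k = 0)"
proof -
  define t where "t = Min ((\<lambda>i. c i / q i) ` {i. 0 < q i})"
  have "t \<in> (\<lambda>i. c i / q i) ` {i. 0 < q i}"
    unfolding t_def using assms by (intro Min_in) auto
  then obtain k where k: "0 < q k" "t = c k / q k" by auto
  have t: "0 \<le> t" using k c by simp
  have "0 \<le> c i - t * q i" for i
  proof (cases "0 < q i")
    case True
    then have "t \<le> c i / q i" unfolding t_def by (intro Min_le) auto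
    then show ?thesis using True by (simp add: le_divide_eq)
  next
    case False
    then have "t * q i \<le> 0" using t by (simp add: mult_nonneg_nonpos)
    then show ?thesis using c by (smt (verit))
  qed
  moreover have "c k - t * q k = 0" using k by simp
  ultimately show ?thesis using t by blast
qed

lemma powr_sum_le_at_endpoint:
  fixes c q :: "'i::finite \<Rightarrow> real"
  assumes p: "0 < p" "p \<le> 1" and "0 \<le> s" "0 \<le> t"
    and "\<forall>i. 0 \<le> c i + s * q i" "\<forall>i. 0 \<le> c i - t * q i"
  shows "(\<Sum>i\<in>UNIV. (c i + s * q i) powr p) \<le> (\<Sum>i\<in>UNIV. c i powr p)
    \<or> (\<Sum>i\<in>UNIV. (c i - t * q i) powr p) \<le> (\<Sum>i\<in>UNIV. c i powr p)"
proof -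
  define F where "F t = (\<Sum>i\<in>UNIV. (c i - t * q i) powr p)" for t
  define \<theta> where "\<theta> = s / (s + t)"
  have \<theta>: "0 \<le> \<theta>" "\<theta> \<le> 1" unfolding \<theta>_def using assms by (auto simp: divide_le_eq)
  have zero: "(1 - \<theta>) * (- s) + \<theta> * t = 0"
    unfolding \<theta>_def using assms by (cases "s + t = 0") (auto simp: field_simps)
  have "(1 - \<theta>) * (c i - (- s) * q i) + \<theta> * (c i - t * q i)
      = c i - ((1 - \<theta>) * (- s) + \<theta> * t) * q i" for i
    by (simp add: algebra_simps)
  then have comb: "(1 - \<theta>) * (c i - (- s) * q i) + \<theta> * (c i - t * q i) = c i" for i
    using zero by simp
  then have "(1 - \<theta>) * F (- s) + \<theta> * F t \<le> F 0"
    using powr_sum_concave[OF p _ _ \<theta>, of "\<lambda>i. c i - (- s) * q i" "\<lambda>i. c i - t * q i"] assms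
    unfolding F_def by simp
  moreover have "(1 - \<theta>) * min (F (- s)) (F t) + \<theta> * min (F (- s)) (F t)
      \<le> (1 - \<theta>) * F (- s) + \<theta> * F t"
    using \<theta> by (intro add_mono mult_left_mono) auto
  moreover have "min (F (- s)) (F t) = (1 - \<theta>) * min (F (- s)) (F t) + \<theta> * min (F (- s)) (F t)"
    by (simp add: algebra_simps)
  ultimately have "F (- s) \<le> F 0 \<or> F t \<le> F 0"
    by (simp only: min_le_iff_disj[symmetric])
  then show ?thesis unfolding F_def by simp
qed

lemma exists_zero_coordinate_powr_sum_le:
  fixes c q :: "'i::finite \<Rightarrow> real"
  assumes p: "0 < p" "p \<le> 1" and c: "\<forall>i. 0 \<le> c i" and "0 < q j"
  shows "\<exists>t. (\<forall>i. 0 \<le> c i - t * q i) \<and> (\<exists>k. c k - t * q k = 0)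
    \<and> (\<Sum>i\<in>UNIV. (c i - t * q i) powr p) \<le> (\<Sum>i\<in>UNIV. c i powr p)"
proof -
  obtain t where t: "0 \<le> t" "\<forall>i. 0 \<le> c i - t * q i" "\<exists>k. c k - t * q k = 0"
    using min_ratio_test[of c q j] c \<open>0 < q j\<close> by blast
  consider (nonneg) "\<forall>i. 0 \<le> q i" | (neg) k where "q k < 0"
    by (meson not_le)
  then show ?thesis
  proof cases
    case nonneg
    then have "(\<Sum>i\<in>UNIV. (c i - t * q i) powr p) \<le> (\<Sum>i\<in>UNIV. c i powr p)"
      using t p by (intro sum_mono powr_mono2) auto
    then show ?thesis using t by auto
  next
    case neg
    obtain s where s: "0 \<le> s" "\<forall>i. 0 \<le> c i + s * q i" "\<exists>k. c k + s * q k = 0"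
      using min_ratio_test[of c "- q" k] c neg by auto
    from powr_sum_le_at_endpoint[OF p s(1) t(1) s(2) t(2)]
    show ?thesis
    proof
      assume "(\<Sum>i\<in>UNIV. (c i + s * q i) powr p) \<le> (\<Sum>i\<in>UNIV. c i powr p)"
      then show ?thesis using s by (intro exI[of _ "- s"]) simp
    next
      assume "(\<Sum>i\<in>UNIV. (c i - t * q i) powr p) \<le> (\<Sum>i\<in>UNIV. c i powr p)"
      then show ?thesis using t by (intro exI[of _ t]) simp
    qed
  qed
qed

lemma p_convexD:
  assumes "p_convex p B" "x \<in> B" "y \<in> B" "0 \<le> a" "0 \<le> b" "a powr p + b powr p = 1"
  shows "a *\<^sub>R x + b *\<^sub>R y \<in> B"
  using assms unfolding p_convex_def by blast

lemma p_conv_least: "p_convex p B \<Longrightarrow> A \<subseteq> B \<Longrightarrow> p_conv p A \<subseteq> B"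
  unfolding p_conv_def by blast

lemma p_convex_scaleR:
  assumes B: "p_convex p B" "0 \<in> B" and "x \<in> B" "0 < p" "0 \<le> r" "r \<le> 1"
  shows "r *\<^sub>R x \<in> B"
proof -
  define b where "b = (1 - r powr p) powr (1 / p)"
  have "r powr p \<le> 1" using assms by (simp add: powr_le1)
  then have "b powr p = 1 - r powr p" unfolding b_def using assms by (simp add: powr_powr)
  then have "r *\<^sub>R x + b *\<^sub>R 0 \<in> B"
    using assms by (intro p_convexD[OF B(1)]) (auto simp: b_def)
  then show ?thesis by simp
qed

lemma p_convex_add_le:
  assumes B: "p_convex p B" "0 \<in> B" and "x \<in> B" "y \<in> B" "0 < p"
    and "0 \<le> a" "0 \<le> b" "a powr p + b powr p \<le> 1"
  shows "a *\<^sub>R x + b *\<^sub>R y \<in> B"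
proof (cases "a = 0 \<and> b = 0")
  case True
  then show ?thesis using B by simp
next
  case False
  define r where "r = (a powr p + b powr p) powr (1 / p)"
  have pos: "0 < a powr p + b powr p" using False assms by (auto simp: add_pos_nonneg add_nonneg_pos)
  then have r: "0 < r" "r \<le> 1" "r powr p = a powr p + b powr p"
    using assms by (auto simp: r_def powr_powr powr_le1)
  then have "(a / r) powr p + (b / r) powr p = 1"
    using assms pos by (simp add: powr_divide add_divide_distrib[symmetric])
  then have "(a / r) *\<^sub>R x + (b / r) *\<^sub>R y \<in> B"
    using assms r by (intro p_convexD[OF B(1)]) auto
  then have "r *\<^sub>R ((a / r) *\<^sub>R x + (b / r) *\<^sub>R y) \<in> B"
    using assms r by (intro p_convex_scaleR[OF B]) auto
  then show ?thesis using r by (simp add: scaleR_add_right)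
qed

lemma p_convex_sum:
  assumes B: "p_convex p B" "0 \<in> B" and p: "0 < p"
    and "finite I" "\<forall>i\<in>I. v i \<in> B" "\<forall>i\<in>I. 0 \<le> c i" "(\<Sum>i\<in>I. c i powr p) \<le> 1"
  shows "(\<Sum>i\<in>I. c i *\<^sub>R v i) \<in> B"
  using assms(4-7)
proof (induction I arbitrary: c rule: finite_induct)
  case empty
  then show ?case using B by simp
next
  case (insert j I)
  define s where "s = (\<Sum>i\<in>I. c i powr p)"
  define r where "r = s powr (1 / p)"
  have s: "0 \<le> s" unfolding s_def by (simp add: sum_nonneg)
  have r: "0 \<le> r" "r powr p = s" unfolding r_def using s p by (auto simp: powr_powr)
  obtain w where w: "w \<in> B" "(\<Sum>i\<in>I. c i *\<^sub>R v i) = r *\<^sub>R w"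
  proof (cases "s = 0")
    case True
    then have "\<forall>i\<in>I. c i = 0"
      using insert by (simp add: s_def sum_nonneg_eq_0_iff)
    then show ?thesis using that[of 0] B by simp
  next
    case False
    then have "0 < r" using r s by auto
    have "(\<Sum>i\<in>I. (c i / r) powr p) = s / r powr p"
      using insert \<open>0 < r\<close> by (simp add: s_def powr_divide sum_divide_distrib)
    then have "(\<Sum>i\<in>I. (c i / r) *\<^sub>R v i) \<in> B"
      using insert r False \<open>0 < r\<close> by (intro insert.IH) auto
    then show ?thesis
      using \<open>0 < r\<close> by (intro that) (auto simp: scaleR_sum_right)
  qed
  have "c j *\<^sub>R v j + r *\<^sub>R w \<in> B"
    using insert r w p by (intro p_convex_add_le[OF B]) (auto simp: s_def)
  then show ?case using insert w by simp
qed

definition p_combinations :: "real \<Rightarrow> ('i::finite \<Rightarrow> 'a::real_vector) \<Rightarrow> 'a set" where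
  "p_combinations p R =
    {\<Sum>i\<in>UNIV. c i *\<^sub>R R i | c. (\<forall>i. 0 \<le> c i) \<and> (\<Sum>i\<in>UNIV. c i powr p) \<le> 1}"

lemma p_convex_p_combinations:
  assumes p: "0 < p" "p \<le> 1"
  shows "p_convex p (p_combinations p R)"
  unfolding p_convex_def
proof (intro ballI allI impI)
  fix x y a b
  assume "x \<in> p_combinations p R" "y \<in> p_combinations p R"
    and ab: "0 \<le> a \<and> 0 \<le> b \<and> a powr p + b powr p = 1"
  then obtain c d where c: "\<forall>i. 0 \<le> c i" "(\<Sum>i\<in>UNIV. c i powr p) \<le> 1" "x = (\<Sum>i\<in>UNIV. c i *\<^sub>R R i)"
    and d: "\<forall>i. 0 \<le> d i" "(\<Sum>i\<in>UNIV. d i powr p) \<le> 1" "y = (\<Sum>i\<in>UNIV. d i *\<^sub>R R i)"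
    unfolding p_combinations_def by blast
  define e where "e i = a * c i + b * d i" for i
  have "e i powr p \<le> a powr p * c i powr p + b powr p * d i powr p" for i
    unfolding e_def using powr_add_le[of "a * c i" "b * d i" p] p ab c d by (simp add: powr_mult)
  then have "(\<Sum>i\<in>UNIV. e i powr p) \<le> (\<Sum>i\<in>UNIV. a powr p * c i powr p + b powr p * d i powr p)"
    by (intro sum_mono)
  also have "\<dots> \<le> a powr p * 1 + b powr p * 1"
    unfolding sum.distrib sum_distrib_left[symmetric] using c d by (intro add_mono mult_left_mono) auto
  finally have "(\<Sum>i\<in>UNIV. e i powr p) \<le> 1" using ab by simp
  moreover have "a *\<^sub>R x + b *\<^sub>R y = (\<Sum>i\<in>UNIV. e i *\<^sub>R R i)"
    unfolding c d e_def by (simp add: scaleR_add_left scaleR_sum_right sum.distrib)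
  moreover have "\<forall>i. 0 \<le> e i" unfolding e_def using ab c d by simp
  ultimately show "a *\<^sub>R x + b *\<^sub>R y \<in> p_combinations p R"
    unfolding p_combinations_def by blast
qed

lemma p_conv_insert_zero_range:
  fixes R :: "'i::finite \<Rightarrow> 'a::real_vector"
  assumes p: "0 < p" "p \<le> 1"
  shows "p_conv p (insert 0 (range R)) = p_combinations p R"
proof
  have "0 \<in> p_combinations p R"
    unfolding p_combinations_def by (intro CollectI exI[of _ "\<lambda>_. 0"]) simp
  moreover have "R k \<in> p_combinations p R" for k
  proof -
    have "(\<Sum>i\<in>UNIV. (if i = k then 1 else 0) powr p) = (1::real)"
      by (simp add: if_distrib[of "\<lambda>x. x powr p"] cong: if_cong)
    then show ?thesis
      unfolding p_combinations_def
      by (intro CollectI exI[of _ "\<lambda>i. if i = k then 1 else 0"])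
        (simp add: if_distrib[of "\<lambda>x. x *\<^sub>R R _"] cong: if_cong)
  qed
  ultimately show "p_conv p (insert 0 (range R)) \<subseteq> p_combinations p R"
    using p by (intro p_conv_least p_convex_p_combinations) auto
next
  show "p_combinations p R \<subseteq> p_conv p (insert 0 (range R))"
    unfolding p_combinations_def p_conv_def using p by (auto intro!: p_convex_sum)
qed

lemma p_combinations_zero_coefficient:
  fixes R :: "'i::finite \<Rightarrow> 'a::real_vector"
  assumes p: "0 < p" "p \<le> 1" and q: "(\<Sum>i\<in>UNIV. q i *\<^sub>R R i) = 0" "0 < q j"
    and "x \<in> p_combinations p R"
  shows "\<exists>c. (\<forall>i. 0 \<le> c i) \<and> (\<exists>k. c k = 0) \<and> (\<Sum>i\<in>UNIV. c i powr p) \<le> 1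
    \<and> x = (\<Sum>i\<in>UNIV. c i *\<^sub>R R i)"
proof -
  obtain c where c: "\<forall>i. 0 \<le> c i" "(\<Sum>i\<in>UNIV. c i powr p) \<le> 1" "x = (\<Sum>i\<in>UNIV. c i *\<^sub>R R i)"
    using \<open>x \<in> p_combinations p R\<close> unfolding p_combinations_def by blast
  obtain t where t: "\<forall>i. 0 \<le> c i - t * q i" "\<exists>k. c k - t * q k = 0"
    "(\<Sum>i\<in>UNIV. (c i - t * q i) powr p) \<le> (\<Sum>i\<in>UNIV. c i powr p)"
    using exists_zero_coordinate_powr_sum_le[of p c q j, OF p c(1) q(2)] by blast
  have "(\<Sum>i\<in>UNIV. (c i - t * q i) *\<^sub>R R i) = x - t *\<^sub>R (\<Sum>i\<in>UNIV. q i *\<^sub>R R i)"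
    unfolding c(3) by (simp add: scaleR_diff_left sum_subtractf scaleR_sum_right)
  then show ?thesis
    using t c q by (intro exI[of _ "\<lambda>i. c i - t * q i"]) auto
qed

lemma exists_inj_range_Compl_option: "\<exists>\<sigma> :: 'a \<Rightarrow> 'a option. inj \<sigma> \<and> range \<sigma> = - {j}"
proof (cases j)
  case None
  have "range Some = - {None :: 'a option}"
    by (metis UNIV_option_conv Compl_eq_Diff_UNIV Diff_insert_absorb option.distinct(1) rangeE)
  then show ?thesis using None by (intro exI[of _ Some]) simp
next
  case (Some k)
  have "inj (Some(k := None))" by (auto simp: inj_def)
  moreover have "range (Some(k := None)) = - {j}"
  proof
    show "range (Some(k := None)) \<subseteq> - {j}"
      using Some by (auto simp: image_iff)
    show "- {j} \<subseteq> range (Some(k := None))"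
    proof
      fix y assume "y \<in> - {j}"
      then show "y \<in> range (Some(k := None))"
        using Some by (cases y) (auto simp: image_iff intro: exI[of _ k])
    qed
  qed
  ultimately show ?thesis by (intro exI[of _ "Some(k := None)"] conjI)
qed

lemma sum_reindex_Compl_zero:
  fixes g :: "'i::finite option \<Rightarrow> 'b::comm_monoid_add"
  assumes "inj \<sigma>" "range \<sigma> = - {j}" "g j = 0"
  shows "(\<Sum>x\<in>UNIV. g x) = (\<Sum>i\<in>UNIV. g (\<sigma> i))"
proof -
  have "(\<Sum>x\<in>UNIV. g x) = (\<Sum>x\<in>range \<sigma>. g x)"
    using assms by (intro sum.mono_neutral_right) auto
  also have "\<dots> = (\<Sum>i\<in>UNIV. g (\<sigma> i))"
    by (simp add: sum.reindex[OF assms(1)])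
  finally show ?thesis .
qed

lemma p_combinations_drop_zero:
  fixes R :: "'i::finite option \<Rightarrow> 'a::real_vector"
  assumes "\<forall>i. 0 \<le> c i" "c j = 0" "(\<Sum>i\<in>UNIV. c i powr p) \<le> 1"
  shows "\<exists>\<sigma> :: 'i \<Rightarrow> 'i option. (\<Sum>i\<in>UNIV. c i *\<^sub>R R i) \<in> p_combinations p (R \<circ> \<sigma>)"
proof -
  obtain \<sigma> :: "'i \<Rightarrow> 'i option" where \<sigma>: "inj \<sigma>" "range \<sigma> = - {j}"
    using exists_inj_range_Compl_option by metis
  define d where "d = c \<circ> \<sigma>"
  have "(\<Sum>i\<in>UNIV. c i *\<^sub>R R i) = (\<Sum>i\<in>UNIV. d i *\<^sub>R (R \<circ> \<sigma>) i)"
    using sum_reindex_Compl_zero[OF \<sigma>, of "\<lambda>x. c x *\<^sub>R R x"] assms(2) by (simp add: d_def)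
  moreover have "(\<Sum>i\<in>UNIV. d i powr p) \<le> 1"
    using sum_reindex_Compl_zero[OF \<sigma>, of "\<lambda>x. c x powr p"] assms(2,3) by (simp add: d_def)
  moreover have "\<forall>i. 0 \<le> d i"
    using assms(1) by (simp add: d_def)
  ultimately have "(\<Sum>i\<in>UNIV. c i *\<^sub>R R i) \<in> p_combinations p (R \<circ> \<sigma>)"
    unfolding p_combinations_def by blast
  then show ?thesis by (rule exI[of _ \<sigma>])
qed

lemma independent_family_coordinates:
  fixes P :: "'i::finite \<Rightarrow> 'a::euclidean_space"
  assumes "inj P" "independent (range P)" "CARD('i) = DIM('a)"
  shows "\<exists>a. x = (\<Sum>i\<in>UNIV. a i *\<^sub>R P i)"
proof -
  have "UNIV \<subseteq> span (range P)"
    using assms by (intro card_ge_dim_independent) (simp_all add: card_image)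
  then obtain u where "x = (\<Sum>v\<in>range P. u v *\<^sub>R v)"
    using span_finite[of "range P"] by auto
  then show ?thesis
    using assms by (auto simp: sum.reindex)
qed

lemma sum_UNIV_option: "(\<Sum>x\<in>UNIV. g x) = g None + (\<Sum>i\<in>UNIV. g (Some i))"
  for g :: "'i::finite option \<Rightarrow> 'b::comm_monoid_add"
  by (simp add: UNIV_option_conv sum.reindex)

theorem lemma4:
  fixes p :: real and P :: "'n::finite \<Rightarrow> real ^ 'n" and Q M :: "real ^ 'n"
  assumes "0 < p" and "p < 1"
    and "inj P" and "independent (range P)"
    and "M \<in> p_conv p (insert 0 (insert Q (range P)))"
  shows "\<exists>R :: 'n \<Rightarrow> real ^ 'n. (\<forall>k. R k \<in> insert Q (range P)) \<and>
           M \<in> p_conv p (insert 0 (range R))"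
proof -
  have p: "0 < p" "p \<le> 1" using assms by auto
  define R where "R = case_option Q P"
  have range_R: "range R = insert Q (range P)"
    unfolding R_def by (simp add: UNIV_option_conv image_image)
  obtain a where "Q = (\<Sum>i\<in>UNIV. a i *\<^sub>R P i)"
    using independent_family_coordinates[OF assms(3,4), of Q] by auto
  then have dependence: "(\<Sum>x\<in>UNIV. case_option 1 (\<lambda>i. - a i) x *\<^sub>R R x) = 0"
    by (simp add: sum_UNIV_option R_def sum_negf)
  have "M \<in> p_combinations p R"
    using assms(5) unfolding range_R[symmetric] p_conv_insert_zero_range[OF p] .
  moreover have "0 < (case_option 1 (\<lambda>i. - a i) None :: real)" by simp
  ultimately obtain c where c: "\<forall>i. 0 \<le> c i" "\<exists>j. c j = 0" "(\<Sum>i\<in>UNIV. c i powr p) \<le> 1"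
    and M: "M = (\<Sum>i\<in>UNIV. c i *\<^sub>R R i)"
    using p_combinations_zero_coefficient[OF p dependence] by blast
  then obtain j where "c j = 0" by blast
  obtain \<sigma> :: "'n \<Rightarrow> 'n option" where "M \<in> p_combinations p (R \<circ> \<sigma>)"
    using p_combinations_drop_zero[of c j p R] c \<open>c j = 0\<close> M by blast
  moreover have "\<forall>k. (R \<circ> \<sigma>) k \<in> insert Q (range P)"
    using range_R by auto
  ultimately show ?thesis
    unfolding p_conv_insert_zero_range[OF p] by (intro exI[of _ "R \<circ> \<sigma>"] conjI)
qed

end
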